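(* There is no continuous real function on $\widetilde{\mathrm{Sp}}(2n)$ which is strictly increasing along every timelike curve and invariant under conjugacy.
   Context: $\omega_0=\sum_j\mathrm{d}x_j\wedge\mathrm{d}y_j$ on $\mathbb{R}^{2n}$, $\mathrm{Sp}(2n)$ its linear symplectic group, $\widetilde{\mathrm{Sp}}(2n)$ its universal cover (a Lie group). $\mathrm{sp}(2n)=\{X:(u,v)\mapsto\omega_0(u,Xv)\text{ symmetric}\}$ and $\mathrm{sp}^+(2n)$ the subset where this form is positive definite. A $C^1$ curve $W$ in $\mathrm{Sp}(2n)$ is timelike if $W'(t)W(t)^{-1}\in\mathrm{sp}^+(2n)$ for all $t$; a curve in $\widetilde{\mathrm{Sp}}(2n)$ is timelike if its projection is. *)

theory Defs
  imports "HOL-Analysis.Analysis" "HOL-Algebra.Group"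
begin

text \<open>Coordinates on R^{2n}: index Inl j is x_j, index Inr j is y_j.\<close>

type_synonym 'n sympl_vec = "real ^ ('n + 'n)"
type_synonym 'n sympl_mat = "real ^ ('n + 'n) ^ ('n + 'n)"

definition omega0 :: "'n::finite sympl_vec \<Rightarrow> 'n sympl_vec \<Rightarrow> real" where
  "omega0 u v = (\<Sum>j\<in>UNIV. u $ Inl j * v $ Inr j - u $ Inr j * v $ Inl j)"

definition Sp :: "'n::finite sympl_mat set" where
  "Sp = {A. \<forall>u v. omega0 (A *v u) (A *v v) = omega0 u v}"

definition sp :: "'n::finite sympl_mat set" where
  "sp = {X. \<forall>u v. omega0 u (X *v v) = omega0 v (X *v u)}"

definition sp_plus :: "'n::finite sympl_mat set" where
  "sp_plus = {X \<in> sp. \<forall>u. u \<noteq> 0 \<longrightarrow> omega0 u (X *v u) > 0}"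

definition timelike_curve :: "(real \<Rightarrow> 'n::finite sympl_mat) \<Rightarrow> real \<Rightarrow> real \<Rightarrow> bool" where
  "timelike_curve W a b \<longleftrightarrow> a < b \<and> (\<forall>t\<in>{a..b}. W t \<in> Sp) \<and>
     (\<exists>W'. (\<forall>t\<in>{a..b}. (W has_vector_derivative W' t) (at t within {a..b})) \<and>
           continuous_on {a..b} W' \<and>
           (\<forall>t\<in>{a..b}. W' t ** matrix_inv (W t) \<in> sp_plus))"

definition universal_cover_Sp ::
  "'g::topological_space set \<Rightarrow> ('g \<Rightarrow> 'g \<Rightarrow> 'g) \<Rightarrow> 'g \<Rightarrow> ('g \<Rightarrow> 'n::finite sympl_mat) \<Rightarrow> bool" where
  "universal_cover_Sp G mul e p \<longleftrightarrow>
     group \<lparr>carrier = G, mult = mul, one = e\<rparr> \<and>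
     continuous_on (G \<times> G) (\<lambda>z. mul (fst z) (snd z)) \<and>
     continuous_on G (m_inv \<lparr>carrier = G, mult = mul, one = e\<rparr>) \<and>
     (\<forall>x\<in>G. \<forall>y\<in>G. p (mul x y) = p x ** p y) \<and>
     covering_space G p Sp \<and>
     simply_connected G"

definition timelike_lift ::
  "'g::topological_space set \<Rightarrow> ('g \<Rightarrow> 'n::finite sympl_mat) \<Rightarrow> (real \<Rightarrow> 'g) \<Rightarrow> real \<Rightarrow> real \<Rightarrow> bool" where
  "timelike_lift G p \<gamma> a b \<longleftrightarrow> \<gamma> ` {a..b} \<subseteq> G \<and> continuous_on {a..b} \<gamma> \<and>
     timelike_curve (p \<circ> \<gamma>) a b"

end

theory Submission
  imports Defs
begin

text \<open>A conjugacy-invariant function is constant on each conjugacy class, so it suffices to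
  find a timelike curve inside one conjugacy class of the universal cover. In Sp(2n) the
  conjugates C(t) w C(t)^-1 of the hyperbolic element w = diag(2, 1/2) by the curve
  C(t) = [[1, t], [t, 1 + t^2]] (both tensored with the identity of R^n) form a timelike
  curve for |t| < 1. Lifting C near t = 0 through the covering map and conjugating a lift of
  w by it gives a timelike curve in the cover along which the function is constant.\<close>

text \<open>block_mat a b c d is the image of the 2x2 matrix [[a, b], [c, d]] under X \<mapsto> X \<otimes> I,
  which maps SL(2) into Sp(2n).\<close>

definition block_mat :: "real \<Rightarrow> real \<Rightarrow> real \<Rightarrow> real \<Rightarrow> 'n::finite sympl_mat" where
  "block_mat a b c d = (\<chi> i k. case (i, k) of
      (Inl i', Inl k') \<Rightarrow> if i' = k' then a else 0
    | (Inl i', Inr k') \<Rightarrow> if i' = k' then b else 0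
    | (Inr i', Inl k') \<Rightarrow> if i' = k' then c else 0
    | (Inr i', Inr k') \<Rightarrow> if i' = k' then d else 0)"

lemma block_mat_nth [simp]:
  "block_mat a b c d $ Inl i $ Inl k = (if i = k then a else 0)"
  "block_mat a b c d $ Inl i $ Inr k = (if i = k then b else 0)"
  "block_mat a b c d $ Inr i $ Inl k = (if i = k then c else 0)"
  "block_mat a b c d $ Inr i $ Inr k = (if i = k then d else 0)"
  by (simp_all add: block_mat_def)

lemma block_mat_eq_iff:
  "(block_mat a b c d :: 'n::finite sympl_mat) = block_mat a' b' c' d' \<longleftrightarrow>
     a = a' \<and> b = b' \<and> c = c' \<and> d = d'"
  by (metis block_mat_nth)

lemma sum_UNIV_Plus:
  "sum g (UNIV :: ('a::finite + 'b::finite) set) = sum (g \<circ> Inl) UNIV + sum (g \<circ> Inr) UNIV"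
  by (subst UNIV_Plus_UNIV [symmetric]) (rule sum.Plus; simp)

lemma sympl_mat_eqI:
  fixes A B :: "'n::finite sympl_mat"
  assumes "\<And>i k. A $ Inl i $ Inl k = B $ Inl i $ Inl k"
    and "\<And>i k. A $ Inl i $ Inr k = B $ Inl i $ Inr k"
    and "\<And>i k. A $ Inr i $ Inl k = B $ Inr i $ Inl k"
    and "\<And>i k. A $ Inr i $ Inr k = B $ Inr i $ Inr k"
  shows "A = B"
proof -
  have "A $ i $ k = B $ i $ k" for i k
    using assms by (cases i; cases k) auto
  then show ?thesis
    by (simp add: vec_eq_iff)
qed

lemma block_mat_mult:
  "(block_mat a b c d :: 'n::finite sympl_mat) ** block_mat a' b' c' d' =
     block_mat (a * a' + b * c') (a * b' + b * d') (c * a' + d * c') (c * b' + d * d')"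
  by (rule sympl_mat_eqI)
    (simp_all add: matrix_matrix_mult_def sum_UNIV_Plus o_def if_distrib if_distribR sum.If_cases)

lemma mat_1_eq_block_mat: "(mat 1 :: 'n::finite sympl_mat) = block_mat 1 0 0 1"
  by (rule sympl_mat_eqI) (simp_all add: mat_def)

lemma block_mat_mult_vec [simp]:
  "(block_mat a b c d *v u) $ Inl j = a * u $ Inl j + b * u $ Inr j"
  "(block_mat a b c d *v u) $ Inr j = c * u $ Inl j + d * u $ Inr j"
  by (simp_all add: matrix_vector_mult_def sum_UNIV_Plus o_def if_distrib if_distribR sum.If_cases)

lemma block_mat_decompose:
  "(block_mat a b c d :: 'n::finite sympl_mat) =
     a *\<^sub>R block_mat 1 0 0 0 + b *\<^sub>R block_mat 0 1 0 0 + c *\<^sub>R block_mat 0 0 1 0 + d *\<^sub>R block_mat 0 0 0 1"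
  by (rule sympl_mat_eqI) simp_all

lemma continuous_on_block_mat [continuous_intros]:
  assumes "continuous_on S a" "continuous_on S b" "continuous_on S c" "continuous_on S d"
  shows "continuous_on S (\<lambda>t. block_mat (a t) (b t) (c t) (d t) :: 'n::finite sympl_mat)"
  by (subst block_mat_decompose) (intro continuous_intros assms)

lemma has_vector_derivative_block_mat:
  assumes "(a has_real_derivative a') F" "(b has_real_derivative b') F"
    and "(c has_real_derivative c') F" "(d has_real_derivative d') F"
  shows "((\<lambda>t. block_mat (a t) (b t) (c t) (d t) :: 'n::finite sympl_mat)
           has_vector_derivative block_mat a' b' c' d') F"
proof -
  have scaled: "((\<lambda>t. x t *\<^sub>R E) has_vector_derivative x' *\<^sub>R E) F"
    if "(x has_real_derivative x') F" for x x' and E :: "'n sympl_mat"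
    using bounded_linear.has_vector_derivative [OF bounded_linear_scaleR_left
        that [unfolded has_real_derivative_iff_has_vector_derivative]] .
  show ?thesis
    unfolding block_mat_decompose [of "a _"] block_mat_decompose [of a']
    by (intro has_vector_derivative_add scaled assms)
qed

lemma omega0_block_mat:
  "omega0 (block_mat a b c d *v u) (block_mat a b c d *v v) = (a * d - b * c) * omega0 u v"
  unfolding omega0_def sum_distrib_left
  by (rule sum.cong) (simp_all add: algebra_simps)

lemma block_mat_in_Sp: "a * d - b * c = 1 \<Longrightarrow> block_mat a b c d \<in> Sp"
  by (simp add: Sp_def omega0_block_mat)

lemma matrix_inv_unique:
  fixes A B :: "'a::semiring_1 ^ 'n ^ 'n"
  assumes "A ** B = mat 1" "B ** A = mat 1"
  shows "matrix_inv A = B"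
  unfolding matrix_inv_def
proof (rule some_equality)
  fix B' assume "A ** B' = mat 1 \<and> B' ** A = mat 1"
  then have "B' = (B' ** A) ** B"
    using assms by (metis matrix_mul_assoc matrix_mul_rid)
  then show "B' = B"
    by (simp add: \<open>A ** B' = mat 1 \<and> B' ** A = mat 1\<close>)
qed (use assms in simp)

lemma matrix_inv_block_mat:
  assumes "a * d - b * c = 1"
  shows "matrix_inv (block_mat a b c d :: 'n::finite sympl_mat) = block_mat d (- b) (- c) a"
  by (rule matrix_inv_unique)
    (use assms in \<open>simp_all add: block_mat_mult mat_1_eq_block_mat algebra_simps\<close>)

lemma binary_quadratic_form_pos:
  fixes p q r x y :: real
  assumes "r > 0" "p\<^sup>2 < - r * q" "x \<noteq> 0 \<or> y \<noteq> 0"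
  shows "r * x\<^sup>2 - 2 * p * x * y - q * y\<^sup>2 > 0"
proof -
  have "r * (r * x\<^sup>2 - 2 * p * x * y - q * y\<^sup>2) = (r * x - p * y)\<^sup>2 + (- r * q - p\<^sup>2) * y\<^sup>2"
    by (simp add: algebra_simps power2_eq_square)
  also have "\<dots> > 0"
    using assms by (cases "y = 0") (auto intro: add_nonneg_pos)
  finally show ?thesis
    using \<open>r > 0\<close> by (simp add: zero_less_mult_iff)
qed

lemma block_mat_in_sp_plus:
  fixes p q r :: real
  assumes "r > 0" "p\<^sup>2 < - r * q"
  shows "(block_mat p q r (- p) :: 'n::finite sympl_mat) \<in> sp_plus"
proof -
  define Q where "Q x y = r * x\<^sup>2 - 2 * p * x * y - q * y\<^sup>2" for x y
  have omega: "omega0 u (block_mat p q r (- p) *v u) = (\<Sum>j\<in>UNIV. Q (u $ Inl j) (u $ Inr j))" for u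
    unfolding omega0_def Q_def by (rule sum.cong) (simp_all add: algebra_simps power2_eq_square)
  have Q_nonneg: "Q x y \<ge> 0" for x y
    using binary_quadratic_form_pos [OF assms, of x y] by (cases "x = 0 \<and> y = 0") (auto simp: Q_def)
  have "omega0 u (block_mat p q r (- p) *v u) > 0" if "u \<noteq> 0" for u :: "'n sympl_vec"
  proof -
    obtain i where "u $ i \<noteq> 0"
      using \<open>u \<noteq> 0\<close> by (auto simp: vec_eq_iff)
    then obtain j where "u $ Inl j \<noteq> 0 \<or> u $ Inr j \<noteq> 0"
      by (cases i) auto
    then have "0 < Q (u $ Inl j) (u $ Inr j)"
      unfolding Q_def by (rule binary_quadratic_form_pos [OF assms])
    also have "\<dots> \<le> (\<Sum>j\<in>UNIV. Q (u $ Inl j) (u $ Inr j))"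
      by (rule member_le_sum) (auto intro: Q_nonneg)
    finally show ?thesis
      by (simp add: omega)
  qed
  moreover have "block_mat p q r (- p) \<in> (sp :: 'n sympl_mat set)"
    unfolding sp_def omega0_def by (auto intro!: sum.cong simp: algebra_simps)
  ultimately show ?thesis
    by (simp add: sp_plus_def)
qed

lemma velocity_of_conjugates_in_sp_plus:
  fixes t :: real
  assumes "t\<^sup>2 < 1"
  shows "(block_mat (15/4 * t - 9/4 * t ^ 3) (9/4 * t\<^sup>2 - 3) (3/4 + 9/2 * t\<^sup>2 - 9/4 * t ^ 4)
           (- (15/4 * t - 9/4 * t ^ 3)) :: 'n::finite sympl_mat) \<in> sp_plus"
proof (rule block_mat_in_sp_plus)
  have "t\<^sup>2 * t\<^sup>2 \<le> t\<^sup>2"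
    using assms by (intro mult_left_le) simp_all
  then have "t ^ 4 \<le> t\<^sup>2"
    by (simp flip: power_add)
  then show "0 < 3/4 + 9/2 * t\<^sup>2 - 9/4 * t ^ 4"
    using zero_le_power2 [of t] by linarith
  have "- (3/4 + 9/2 * t\<^sup>2 - 9/4 * t ^ 4) * (9/4 * t\<^sup>2 - 3) - (15/4 * t - 9/4 * t ^ 3)\<^sup>2
          = 9/4 * (1 - t\<^sup>2)"
    by (simp add: field_simps power2_eq_square power3_eq_cube power4_eq_xxxx)
  then show "(15/4 * t - 9/4 * t ^ 3)\<^sup>2 < - (3/4 + 9/2 * t\<^sup>2 - 9/4 * t ^ 4) * (9/4 * t\<^sup>2 - 3)"
    using assms by simp
qed

lemma timelike_curve_conjugates:
  fixes a b :: real
  assumes "- 1 < a" "b < 1" "a < b"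
  shows "timelike_curve (\<lambda>t. block_mat 1 t t (1 + t\<^sup>2) ** block_mat 2 0 0 (1 / 2) **
           matrix_inv (block_mat 1 t t (1 + t\<^sup>2)) :: 'n::finite sympl_mat) a b"
proof -
  define W :: "real \<Rightarrow> 'n sympl_mat" where
    "W t = block_mat (2 + 3/2 * t\<^sup>2) (- 3/2 * t) (3/2 * t * (1 + t\<^sup>2)) ((1 - 3 * t\<^sup>2) / 2)" for t
  define W' :: "real \<Rightarrow> 'n sympl_mat" where
    "W' t = block_mat (3 * t) (- 3/2) (3/2 + 9/2 * t\<^sup>2) (- 3 * t)" for t
  have det_W: "(2 + 3/2 * t\<^sup>2) * ((1 - 3 * t\<^sup>2) / 2) - (- 3/2 * t) * (3/2 * t * (1 + t\<^sup>2)) = 1"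
    for t :: real
    by (simp add: field_simps power2_eq_square)
  have conj: "(\<lambda>t. block_mat 1 t t (1 + t\<^sup>2) ** block_mat 2 0 0 (1 / 2) **
                matrix_inv (block_mat 1 t t (1 + t\<^sup>2))) = W"
    by (rule ext) (simp add: W_def matrix_inv_block_mat block_mat_mult block_mat_eq_iff
        field_simps power2_eq_square)
  have deriv: "(W has_vector_derivative W' t) (at t within S)" for t S
    unfolding W_def W'_def
    by (rule has_vector_derivative_block_mat; (rule derivative_eq_intros refl)+)
      (simp_all add: field_simps power2_eq_square)
  have log_deriv: "W' t ** matrix_inv (W t) = block_mat (15/4 * t - 9/4 * t ^ 3) (9/4 * t\<^sup>2 - 3)
                      (3/4 + 9/2 * t\<^sup>2 - 9/4 * t ^ 4) (- (15/4 * t - 9/4 * t ^ 3))" for t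
    unfolding W_def W'_def matrix_inv_block_mat [OF det_W]
    by (simp add: block_mat_mult block_mat_eq_iff field_simps power2_eq_square power3_eq_cube
        power4_eq_xxxx)
  have "W' t ** matrix_inv (W t) \<in> sp_plus" if "t\<^sup>2 < 1" for t
    unfolding log_deriv using that by (rule velocity_of_conjugates_in_sp_plus)
  moreover have "t\<^sup>2 < 1" if "t \<in> {a..b}" for t
    using that assms by (simp add: abs_square_less_1 abs_less_iff)
  moreover have "W t \<in> Sp" for t
    unfolding W_def by (rule block_mat_in_Sp [OF det_W])
  moreover have "continuous_on {a..b} W'"
    unfolding W'_def by (intro continuous_intros)
  ultimately show ?thesis
    unfolding timelike_curve_def conj using \<open>a < b\<close> deriv by (auto intro!: exI [of _ W'])
qed

lemma covering_space_lift_path_locally: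
  fixes c :: "real \<Rightarrow> 'b::topological_space"
  assumes cov: "covering_space C p S"
    and c: "continuous_on {a..b} c" "c ` {a..b} \<subseteq> S" and "a < b"
  obtains b' \<sigma> where "a < b'" "b' \<le> b" "continuous_on {a..b'} \<sigma>" "\<sigma> ` {a..b'} \<subseteq> C"
    "\<And>t. t \<in> {a..b'} \<Longrightarrow> p (\<sigma> t) = c t"
proof -
  have "c a \<in> S"
    using c \<open>a < b\<close> by auto
  then obtain x T U q where "p x = c a" "x \<in> T" "openin (top_of_set C) T"
    "c a \<in> U" "openin (top_of_set S) U" and hom: "homeomorphism T U p q"
    by (rule covering_space_local_homeomorphism_alt [OF cov])
  have "openin (top_of_set {a..b}) ({a..b} \<inter> c -` U)"
    using c \<open>openin (top_of_set S) U\<close> by (intro continuous_openin_preimage) auto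
  moreover have "a \<in> {a..b} \<inter> c -` U"
    using \<open>c a \<in> U\<close> \<open>a < b\<close> by simp
  ultimately obtain \<epsilon> where "\<epsilon> > 0" and \<epsilon>: "cball a \<epsilon> \<inter> {a..b} \<subseteq> c -` U"
    unfolding openin_contains_cball by blast
  define b' where "b' = min b (a + \<epsilon>)"
  have sub: "{a..b'} \<subseteq> {a..b}"
    by (simp add: b'_def)
  have cU: "c ` {a..b'} \<subseteq> U"
    using \<epsilon> by (auto simp: b'_def dist_real_def subset_iff)
  have q: "continuous_on U q" "q ` U \<subseteq> T" "\<And>y. y \<in> U \<Longrightarrow> p (q y) = y"
    using hom by (auto simp: homeomorphism_def)
  show ?thesis
  proof
    show "a < b'" "b' \<le> b"
      using \<open>a < b\<close> \<open>\<epsilon> > 0\<close> by (simp_all add: b'_def)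
    show "continuous_on {a..b'} (q \<circ> c)"
      by (rule continuous_on_compose [OF continuous_on_subset [OF c(1) sub]
          continuous_on_subset [OF q(1) cU]])
    show "(q \<circ> c) ` {a..b'} \<subseteq> C"
      using q(2) cU openin_imp_subset [OF \<open>openin (top_of_set C) T\<close>] by auto
    show "p ((q \<circ> c) t) = c t" if "t \<in> {a..b'}" for t
      using q(3) cU that by (simp add: image_subset_iff)
  qed
qed

lemma timelike_curve_cong:
  assumes "timelike_curve W a b" "\<And>t. t \<in> {a..b} \<Longrightarrow> V t = W t"
  shows "timelike_curve V a b"
proof -
  obtain W' where "\<forall>t\<in>{a..b}. (W has_vector_derivative W' t) (at t within {a..b})"
    "continuous_on {a..b} W'" "\<forall>t\<in>{a..b}. W' t ** matrix_inv (W t) \<in> sp_plus"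
    using assms(1) unfolding timelike_curve_def by blast
  with assms show ?thesis
    unfolding timelike_curve_def
    by (auto intro!: exI [of _ W'] has_vector_derivative_transform [of _ "{a..b}" V W])
qed

locale Sp_universal_cover =
  fixes G :: "'g::topological_space set" and mul :: "'g \<Rightarrow> 'g \<Rightarrow> 'g" and e :: 'g
    and p :: "'g \<Rightarrow> 'n::finite sympl_mat"
  assumes universal_cover: "universal_cover_Sp G mul e p"
begin

abbreviation cover_group where "cover_group \<equiv> \<lparr>carrier = G, mult = mul, one = e\<rparr>"

sublocale group cover_group
  using universal_cover by (simp add: universal_cover_Sp_def)

lemma mul_closed: "x \<in> G \<Longrightarrow> y \<in> G \<Longrightarrow> mul x y \<in> G"
  using m_closed [of x y] by simp

lemma projection_mult: "x \<in> G \<Longrightarrow> y \<in> G \<Longrightarrow> p (mul x y) = p x ** p y"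
  using universal_cover by (simp add: universal_cover_Sp_def)

lemma projection_covering: "covering_space G p Sp"
  using universal_cover by (simp add: universal_cover_Sp_def)

lemma projection_image: "p ` G = Sp"
  using projection_covering by (rule covering_space_imp_surjective)

lemma projection_one: "p e = mat 1"
proof -
  have "mat 1 \<in> p ` G"
    by (simp add: projection_image mat_1_eq_block_mat block_mat_in_Sp)
  then obtain x where "x \<in> G" "mat 1 = p x"
    by (rule imageE)
  then have "mat 1 = mat 1 ** p e"
    using projection_mult [of x e] r_one [of x] one_closed by simp
  then show ?thesis
    by simp
qed

lemma projection_inv:
  assumes "x \<in> G"
  shows "p (inv\<^bsub>cover_group\<^esub> x) = matrix_inv (p x)"
proof (rule sym, rule matrix_inv_unique)
  show "p x ** p (inv\<^bsub>cover_group\<^esub> x) = mat 1"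
    using assms projection_mult [of x "inv\<^bsub>cover_group\<^esub> x"] r_inv [of x] inv_closed [of x]
    by (simp add: projection_one)
  show "p (inv\<^bsub>cover_group\<^esub> x) ** p x = mat 1"
    using assms projection_mult [of "inv\<^bsub>cover_group\<^esub> x" x] l_inv [of x] inv_closed [of x]
    by (simp add: projection_one)
qed

lemma continuous_on_conjugates:
  assumes "continuous_on S \<sigma>" "\<sigma> ` S \<subseteq> G" "g \<in> G"
  shows "continuous_on S (\<lambda>t. mul (mul (\<sigma> t) g) (inv\<^bsub>cover_group\<^esub> (\<sigma> t)))"
proof -
  have mul_cont: "continuous_on (G \<times> G) (\<lambda>z. mul (fst z) (snd z))"
    and inv_cont: "continuous_on G (m_inv cover_group)"
    using universal_cover by (simp_all add: universal_cover_Sp_def)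
  have continuous_on_mul: "continuous_on S (\<lambda>t. mul (u t) (v t))"
    if "continuous_on S u" "continuous_on S v" "u ` S \<subseteq> G" "v ` S \<subseteq> G" for u v
  proof -
    have "(\<lambda>t. (u t, v t)) ` S \<subseteq> G \<times> G"
      using that(3,4) by blast
    from continuous_on_compose2 [OF mul_cont continuous_on_Pair [OF that(1,2)] this]
    show ?thesis
      by simp
  qed
  have inv_\<sigma>: "continuous_on S (\<lambda>t. inv\<^bsub>cover_group\<^esub> (\<sigma> t))"
    using continuous_on_compose2 [OF inv_cont assms(1,2)] by simp
  show ?thesis
    using assms inv_closed mul_closed
    by (intro continuous_on_mul inv_\<sigma> continuous_on_const) auto
qed

lemma timelike_lift_conjugates:
  assumes "continuous_on {a..b} \<sigma>" "\<sigma> ` {a..b} \<subseteq> G" "g \<in> G"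
    and "timelike_curve (\<lambda>t. p (\<sigma> t) ** p g ** matrix_inv (p (\<sigma> t))) a b"
  shows "timelike_lift G p (\<lambda>t. mul (mul (\<sigma> t) g) (inv\<^bsub>cover_group\<^esub> (\<sigma> t))) a b"
  unfolding timelike_lift_def
proof (intro conjI)
  show "(\<lambda>t. mul (mul (\<sigma> t) g) (inv\<^bsub>cover_group\<^esub> (\<sigma> t))) ` {a..b} \<subseteq> G"
    using assms(2,3) inv_closed by (auto intro!: mul_closed)
  show "continuous_on {a..b} (\<lambda>t. mul (mul (\<sigma> t) g) (inv\<^bsub>cover_group\<^esub> (\<sigma> t)))"
    using assms(1-3) by (rule continuous_on_conjugates)
  show "timelike_curve (p \<circ> (\<lambda>t. mul (mul (\<sigma> t) g) (inv\<^bsub>cover_group\<^esub> (\<sigma> t)))) a b"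
    using assms(4)
  proof (rule timelike_curve_cong)
    fix t assume "t \<in> {a..b}"
    then have "\<sigma> t \<in> G"
      using assms(2) by blast
    then show "(p \<circ> (\<lambda>t. mul (mul (\<sigma> t) g) (inv\<^bsub>cover_group\<^esub> (\<sigma> t)))) t =
               p (\<sigma> t) ** p g ** matrix_inv (p (\<sigma> t))"
      using assms(3) inv_closed by (simp add: projection_mult projection_inv mul_closed)
  qed
qed

lemma timelike_lift_in_conjugacy_class:
  obtains \<gamma> b g where "timelike_lift G p \<gamma> 0 b" "0 < b" "g \<in> G"
    "\<And>t. t \<in> {0..b} \<Longrightarrow> \<exists>h\<in>G. \<gamma> t = mul (mul h g) (inv\<^bsub>cover_group\<^esub> h)"
proof -
  define C :: "real \<Rightarrow> 'n sympl_mat" where "C t = block_mat 1 t t (1 + t\<^sup>2)" for t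
  have "continuous_on {0..1/2} C" "C ` {0..1/2} \<subseteq> Sp"
    unfolding C_def by (auto intro!: continuous_intros block_mat_in_Sp simp: power2_eq_square)
  then obtain b \<sigma> where "0 < b" "b \<le> 1/2" "continuous_on {0..b} \<sigma>" "\<sigma> ` {0..b} \<subseteq> G"
    and p\<sigma>: "\<And>t. t \<in> {0..b} \<Longrightarrow> p (\<sigma> t) = C t"
    by (rule covering_space_lift_path_locally [OF projection_covering]) auto
  have "block_mat 2 0 0 (1/2) \<in> p ` G"
    by (simp add: projection_image block_mat_in_Sp)
  then obtain g where "g \<in> G" and pg: "block_mat 2 0 0 (1/2) = p g"
    by (rule imageE)
  have "timelike_curve (\<lambda>t. C t ** p g ** matrix_inv (C t)) 0 b"
    using timelike_curve_conjugates [of 0 b] \<open>0 < b\<close> \<open>b \<le> 1/2\<close> by (simp add: C_def flip: pg)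
  then have "timelike_curve (\<lambda>t. p (\<sigma> t) ** p g ** matrix_inv (p (\<sigma> t))) 0 b"
    by (rule timelike_curve_cong) (simp add: p\<sigma>)
  then have "timelike_lift G p (\<lambda>t. mul (mul (\<sigma> t) g) (inv\<^bsub>cover_group\<^esub> (\<sigma> t))) 0 b"
    by (rule timelike_lift_conjugates [OF \<open>continuous_on {0..b} \<sigma>\<close> \<open>\<sigma> ` {0..b} \<subseteq> G\<close> \<open>g \<in> G\<close>])
  then show ?thesis
    using that \<open>0 < b\<close> \<open>g \<in> G\<close> \<open>\<sigma> ` {0..b} \<subseteq> G\<close> by blast
qed

end

theorem proposition9p3:
  fixes G :: "'g::topological_space set" and mul :: "'g \<Rightarrow> 'g \<Rightarrow> 'g" and e :: 'g
    and p :: "'g \<Rightarrow> 'n::finite sympl_mat"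
  assumes "universal_cover_Sp G mul e p"
  shows "\<not> (\<exists>f :: 'g \<Rightarrow> real.
             continuous_on G f \<and>
             (\<forall>g\<in>G. \<forall>h\<in>G.
                f (mul (mul h g) (m_inv \<lparr>carrier = G, mult = mul, one = e\<rparr> h)) = f g) \<and>
             (\<forall>\<gamma> a b. timelike_lift G p \<gamma> a b \<longrightarrow>
                (\<forall>s t. a \<le> s \<and> s < t \<and> t \<le> b \<longrightarrow> f (\<gamma> s) < f (\<gamma> t))))"
proof (intro notI, elim exE conjE)
  interpret Sp_universal_cover G mul e p
    using assms by (rule Sp_universal_cover.intro)
  fix f :: "'g \<Rightarrow> real"
  assume f_conj: "\<forall>g\<in>G. \<forall>h\<in>G. f (mul (mul h g) (inv\<^bsub>cover_group\<^esub> h)) = f g"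
    and f_incr: "\<forall>\<gamma> a b. timelike_lift G p \<gamma> a b \<longrightarrow>
                   (\<forall>s t. a \<le> s \<and> s < t \<and> t \<le> b \<longrightarrow> f (\<gamma> s) < f (\<gamma> t))"
  obtain \<gamma> b g where "timelike_lift G p \<gamma> 0 b" "0 < b" "g \<in> G"
    and conj: "\<And>t. t \<in> {0..b} \<Longrightarrow> \<exists>h\<in>G. \<gamma> t = mul (mul h g) (inv\<^bsub>cover_group\<^esub> h)"
    using timelike_lift_in_conjugacy_class by blast
  then have "f (\<gamma> 0) < f (\<gamma> b)"
    using f_incr by simp
  moreover have "f (\<gamma> t) = f g" if "t \<in> {0..b}" for t
    using conj [OF that] f_conj \<open>g \<in> G\<close> by auto
  ultimately show False
    using \<open>0 < b\<close> by simp
qed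

end
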